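(* Let $f:X\to Y$ be a function between topological spaces, where $\gamma$ is a regular operation. Then $f$ is $\gamma$-semi-continuous if and only if for each $x\in X$ and each $\gamma$-open set $B\subseteq Y$ containing $f(x)$, there exists a $\gamma^{*}$-semi-open set $A\subseteq X$ such that $x\in A$ and $f(A)\subseteq B$.
   Context: Each of the spaces $X$, $Y$ carries an operation, both denoted $\gamma$: a map $V\mapsto V^\gamma$ from open sets to subsets with $V\subseteq V^\gamma$. In a space $Z$, for $A\subseteq Z$, $int_\gamma(A)=\{x\in A: \text{there is an open } N \text{ with } x\in N,\ N^\gamma\subseteq A\}$; $A$ is $\gamma$-open iff $A=int_\gamma(A)$. $cl_\gamma(A)$ is the set of $x\in Z$ such that $U^\gamma\cap A\neq\emptyset$ for every open $U\ni x$. $A$ is $\gamma^{*}$-semi-open if there is a $\gamma$-open $O$ with $O\subseteq A\subseteq cl_\gamma(O)$. $f$ is $\gamma$-semi-continuous if $f^{-1}(B)$ is $\gamma^{*}$-semi-open in $X$ for every $\gamma$-open $B$ in $Y$. $\gamma$ is regular if for every point $x$ and open neighbourhoods $U,V$ of $x$ there is an open neighbourhood $W$ of $x$ with $W^\gamma\subseteq U^\gamma\cap V^\gamma$. *)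

theory Defs
  imports "HOL-Analysis.Analysis"
begin

text \<open>An operation on the space T: a map V |-> g V with V contained in g V for open V.
  Only its values on open sets matter.\<close>
definition is_operation :: "'a topology \<Rightarrow> ('a set \<Rightarrow> 'a set) \<Rightarrow> bool" where
  "is_operation T g \<longleftrightarrow> (\<forall>V. openin T V \<longrightarrow> V \<subseteq> g V)"

definition gamma_int :: "'a topology \<Rightarrow> ('a set \<Rightarrow> 'a set) \<Rightarrow> 'a set \<Rightarrow> 'a set" where
  "gamma_int T g A = {x \<in> A. \<exists>N. openin T N \<and> x \<in> N \<and> g N \<subseteq> A}"

definition gamma_open :: "'a topology \<Rightarrow> ('a set \<Rightarrow> 'a set) \<Rightarrow> 'a set \<Rightarrow> bool" where
  "gamma_open T g A \<longleftrightarrow> A \<subseteq> topspace T \<and> A = gamma_int T g A"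

definition gamma_cl :: "'a topology \<Rightarrow> ('a set \<Rightarrow> 'a set) \<Rightarrow> 'a set \<Rightarrow> 'a set" where
  "gamma_cl T g A = {x \<in> topspace T. \<forall>U. openin T U \<and> x \<in> U \<longrightarrow> g U \<inter> A \<noteq> {}}"

definition gamma_star_semi_open :: "'a topology \<Rightarrow> ('a set \<Rightarrow> 'a set) \<Rightarrow> 'a set \<Rightarrow> bool" where
  "gamma_star_semi_open T g A \<longleftrightarrow> A \<subseteq> topspace T \<and>
     (\<exists>G. gamma_open T g G \<and> G \<subseteq> A \<and> A \<subseteq> gamma_cl T g G)"

definition regular_operation :: "'a topology \<Rightarrow> ('a set \<Rightarrow> 'a set) \<Rightarrow> bool" where
  "regular_operation T g \<longleftrightarrow>
     (\<forall>x U V. openin T U \<and> openin T V \<and> x \<in> U \<and> x \<in> V \<longrightarrow>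
        (\<exists>W. openin T W \<and> x \<in> W \<and> g W \<subseteq> g U \<inter> g V))"

definition gamma_semi_continuous ::
  "'a topology \<Rightarrow> ('a set \<Rightarrow> 'a set) \<Rightarrow> 'b topology \<Rightarrow> ('b set \<Rightarrow> 'b set) \<Rightarrow> ('a \<Rightarrow> 'b) \<Rightarrow> bool" where
  "gamma_semi_continuous X gX Y gY f \<longleftrightarrow>
     (\<forall>B. gamma_open Y gY B \<longrightarrow> gamma_star_semi_open X gX (topspace X \<inter> f -` B))"

end

theory Submission
  imports Defs
begin

text \<open>\<gamma>*-semi-open sets are closed under arbitrary unions, so a set is \<gamma>*-semi-open as soon as each
  of its points has a \<gamma>*-semi-open neighbourhood inside it. The preimage of a \<gamma>-open set has
  this local property exactly when the pointwise condition holds.\<close>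

lemma gamma_open_Union:
  assumes "\<And>G. G \<in> \<G> \<Longrightarrow> gamma_open T g G"
  shows "gamma_open T g (\<Union>\<G>)"
proof -
  have "x \<in> gamma_int T g (\<Union>\<G>)" if "G \<in> \<G>" "x \<in> G" for G x
  proof -
    have "x \<in> gamma_int T g G"
      using assms that unfolding gamma_open_def by blast
    then obtain N where "openin T N" "x \<in> N" "g N \<subseteq> G"
      unfolding gamma_int_def by blast
    with that show ?thesis
      unfolding gamma_int_def by blast
  qed
  moreover have "\<Union>\<G> \<subseteq> topspace T"
    using assms unfolding gamma_open_def by blast
  ultimately show ?thesis
    unfolding gamma_open_def gamma_int_def by blast
qed

lemma gamma_cl_mono: "A \<subseteq> B \<Longrightarrow> gamma_cl T g A \<subseteq> gamma_cl T g B"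
  unfolding gamma_cl_def by blast

lemma gamma_star_semi_open_Union:
  assumes "\<And>A. A \<in> \<A> \<Longrightarrow> gamma_star_semi_open T g A"
  shows "gamma_star_semi_open T g (\<Union>\<A>)"
proof -
  obtain G where G: "\<And>A. A \<in> \<A> \<Longrightarrow>
      gamma_open T g (G A) \<and> G A \<subseteq> A \<and> A \<subseteq> gamma_cl T g (G A)"
    using assms unfolding gamma_star_semi_open_def by metis
  have "gamma_open T g (\<Union>A\<in>\<A>. G A)"
    using G by (intro gamma_open_Union) blast
  moreover have "\<Union>\<A> \<subseteq> gamma_cl T g (\<Union>A\<in>\<A>. G A)"
    using G gamma_cl_mono[of "G _" "\<Union>A\<in>\<A>. G A" T g] by blast
  moreover have "\<Union>\<A> \<subseteq> topspace T"
    using assms unfolding gamma_star_semi_open_def by blast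
  ultimately show ?thesis
    unfolding gamma_star_semi_open_def using G by blast
qed

lemma gamma_star_semi_open_locally:
  assumes "\<And>x. x \<in> S \<Longrightarrow> \<exists>A. gamma_star_semi_open T g A \<and> x \<in> A \<and> A \<subseteq> S"
  shows "gamma_star_semi_open T g S"
proof -
  have "S = \<Union>{A. gamma_star_semi_open T g A \<and> A \<subseteq> S}"
    using assms by blast
  then show ?thesis
    by (metis (mono_tags, lifting) gamma_star_semi_open_Union mem_Collect_eq)
qed

theorem theorem4p2:
  fixes X :: "'a topology" and Y :: "'b topology"
    and gX :: "'a set \<Rightarrow> 'a set" and gY :: "'b set \<Rightarrow> 'b set"
    and f :: "'a \<Rightarrow> 'b"
  assumes "is_operation X gX" and "is_operation Y gY"
    and "regular_operation X gX" and "regular_operation Y gY"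
    and "f ` topspace X \<subseteq> topspace Y"
  shows "gamma_semi_continuous X gX Y gY f \<longleftrightarrow>
    (\<forall>x \<in> topspace X. \<forall>B. gamma_open Y gY B \<and> f x \<in> B \<longrightarrow>
       (\<exists>A. gamma_star_semi_open X gX A \<and> x \<in> A \<and> f ` A \<subseteq> B))"
    (is "_ \<longleftrightarrow> ?pointwise")
proof
  assume "gamma_semi_continuous X gX Y gY f"
  then show ?pointwise
    unfolding gamma_semi_continuous_def by blast
next
  assume pointwise: ?pointwise
  show "gamma_semi_continuous X gX Y gY f"
    unfolding gamma_semi_continuous_def
  proof (intro allI impI gamma_star_semi_open_locally)
    fix B x
    assume "gamma_open Y gY B" and "x \<in> topspace X \<inter> f -` B"
    then obtain A where A: "gamma_star_semi_open X gX A" "x \<in> A" "f ` A \<subseteq> B"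
      using pointwise by blast
    moreover have "A \<subseteq> topspace X"
      using A(1) unfolding gamma_star_semi_open_def by blast
    ultimately show "\<exists>A. gamma_star_semi_open X gX A \<and> x \<in> A \<and> A \<subseteq> topspace X \<inter> f -` B"
      by blast
  qed
qed

end
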